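(* In the contention game with $k=2$ channels under acknowledgement-based feedback and $n\ge2$ players, let all players other than $i$ use $f^2$, and let player $i$ use any protocol $g_i\in\mathcal G^{f^2}$. Then the expected latency of player $i$ under the profile $(f^2_{-i},g_i)$ is $2^n/n$.
   Context: Contention game: $n$ players, channels $K=\{1,\dots,k\}$, slots $t=1,2,\dots$; each player has one packet, initially pending; in each slot a pending player chooses (possibly randomly) an action in $\{0,1,\dots,k\}$ ($0$ = idle, $a$ = transmit on channel $a$); a lone transmitter on a channel succeeds and leaves, colliding transmitters remain pending. Latency = slot of successful transmission. Acknowledgement-based: decision rules depend only on the personal action history. $f^2$ is the protocol that in every slot, regardless of history, transmits on each of the two channels with probability $1/2$ and never idles. For $\tau^*\ge1$ and a personal history $h_{i,\tau^*}=(a_{i,1},\dots,a_{i,\tau^*})$, $g_i(h_{i,\tau^*})$ is the protocol playing $a_{i,t}$ with probability $1$ for $1\le t\le\tau^*$ and following $f^2$ for $t>\tau^*$. $\mathcal G^{f^2}$ is the set of all such $g_i(h_{i,\tau^*})$, over all $\tau^*\ge1$, for which $h_{i,\tau^*}$ occurs with positive probability when all players use $f^2$ (i.e., $a_{i,t}\neq0$ for all $t\le\tau^*$). *)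

theory Defs
  imports "HOL-Probability.Probability"
begin

text \<open>Players are 0,...,n-1. An action is a natural number: 0 = idle, a >= 1 = transmit on channel a.
  A protocol maps the personal action history (list of own past actions, oldest first)
  to a distribution over the next action.
  A game state maps each player j to (pending j, personal history of j).\<close>

type_synonym protocol = "nat list \<Rightarrow> nat pmf"
type_synonym gstate = "nat \<Rightarrow> bool \<times> nat list"

definition init_state :: "nat \<Rightarrow> gstate" where
  "init_state n = (\<lambda>j. (j < n, []))"

definition succeeds :: "nat \<Rightarrow> gstate \<Rightarrow> (nat \<Rightarrow> nat) \<Rightarrow> nat \<Rightarrow> bool" where
  "succeeds n s a j \<longleftrightarrow> a j \<noteq> 0 \<and> (\<forall>j'<n. j' \<noteq> j \<longrightarrow> fst (s j') \<longrightarrow> a j' \<noteq> a j)"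

definition step :: "nat \<Rightarrow> (nat \<Rightarrow> protocol) \<Rightarrow> gstate \<Rightarrow> gstate pmf" where
  "step n P s =
     map_pmf
       (\<lambda>a. \<lambda>j. if j < n \<and> fst (s j)
                 then (\<not> succeeds n s a j, snd (s j) @ [a j])
                 else s j)
       (Pi_pmf {..<n} 0 (\<lambda>j. if fst (s j) then P j (snd (s j)) else return_pmf 0))"

primrec state_dist :: "nat \<Rightarrow> (nat \<Rightarrow> protocol) \<Rightarrow> nat \<Rightarrow> gstate pmf" where
  "state_dist n P 0 = return_pmf (init_state n)"
| "state_dist n P (Suc t) = state_dist n P t \<bind> step n P"

text \<open>Probability that the latency of player i equals t, i.e. that i transmits
  successfully in slot t (slots are numbered 1,2,...).\<close>
definition latency_prob :: "nat \<Rightarrow> (nat \<Rightarrow> protocol) \<Rightarrow> nat \<Rightarrow> nat \<Rightarrow> real" where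
  "latency_prob n P i t =
     (if t = 0 then 0 else
      measure_pmf.prob
        (state_dist n P (t - 1) \<bind> (\<lambda>s. map_pmf (\<lambda>s'. (s, s')) (step n P s)))
        {(s, s'). fst (s i) \<and> \<not> fst (s' i)})"

text \<open>Expected latency of player i (in [0,\<infinity>]); it is \<infinity> if with positive probability
  player i never succeeds.\<close>
definition expected_latency :: "nat \<Rightarrow> (nat \<Rightarrow> protocol) \<Rightarrow> nat \<Rightarrow> ennreal" where
  "expected_latency n P i =
     (\<Sum>t. of_nat t * ennreal (latency_prob n P i t))
     + (if (\<Sum>t. ennreal (latency_prob n P i t)) < 1 then \<infinity> else 0)"

definition f2 :: protocol where
  "f2 = (\<lambda>h. pmf_of_set {1, 2})"

definition g_of :: "nat list \<Rightarrow> protocol" where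
  "g_of hs = (\<lambda>h. if length h < length hs then return_pmf (hs ! length h) else f2 h)"

text \<open>The class G^{f^2}: tau* >= 1 and the history has positive probability under f^2,
  i.e. every prescribed action is nonzero (it is a channel in {1,2}).\<close>
definition G_f2 :: "protocol set" where
  "G_f2 = {g_of hs | hs. hs \<noteq> [] \<and> set hs \<subseteq> {1, 2}}"

end

theory Submission
  imports Defs
begin

(* Let m be the number of pending players. All pending players other than i pick each channel
   with probability 1/2, so whatever i does, every pending player succeeds with probability
   2^(1-m). Consequently the potential W(m) = remaining_latency m, counted while i is pending,
   drops in expectation by exactly Pr[i pending] in each slot. Telescoping, the probabilities that
   i is still pending after t slots sum to W(n) = 2^n/n, and by the tail-sum formula this sum is
   the expected latency. *)

lemma measure_pmf_prob_cong_support: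
  assumes "\<And>x. x \<in> set_pmf p \<Longrightarrow> x \<in> A \<longleftrightarrow> x \<in> B"
  shows "measure_pmf.prob p A = measure_pmf.prob p B"
  by (rule measure_prob_cong_0) (use assms in \<open>auto simp: pmf_eq_0_set_pmf\<close>)

lemma expectation_cong_support:
  fixes f g :: "'a \<Rightarrow> real"
  assumes "\<And>x. x \<in> set_pmf p \<Longrightarrow> f x = g x"
  shows "measure_pmf.expectation p f = measure_pmf.expectation p g"
  by (rule integral_cong_AE) (use assms in \<open>auto simp: AE_measure_pmf_iff\<close>)

lemma expectation_bind_pmf_bounded:
  fixes f :: "'b \<Rightarrow> real"
  assumes "\<And>x. \<bar>f x\<bar> \<le> B"
  shows "measure_pmf.expectation (p \<bind> q) f =
         measure_pmf.expectation p (\<lambda>x. measure_pmf.expectation (q x) f)"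
  unfolding measure_pmf_bind
  by (rule integral_bind[where K="count_space UNIV" and B=B and B'=1])
     (use assms measurable_measure_pmf[of q] in
       \<open>auto simp: measure_pmf.emeasure_space_1 intro: prob_space_imp_subprob_space\<close>)

lemma sums_potential_drop:
  fixes q E :: "nat \<Rightarrow> real"
  assumes drop: "\<And>t. E (Suc t) = E t - q t"
    and E_nonneg: "\<And>t. 0 \<le> E t" and E_le: "\<And>t. E t \<le> C * q t"
    and q_nonneg: "\<And>t. 0 \<le> q t"
  shows "q sums E 0"
proof -
  have partial: "(\<Sum>k<t. q k) = E 0 - E t" for t
    by (induction t) (simp_all add: drop)
  have "summable q"
    by (rule summableI_nonneg_bounded[where x = "E 0"]) (use q_nonneg E_nonneg partial in auto)
  then have "q \<longlonglongrightarrow> 0"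
    by (rule summable_LIMSEQ_zero)
  then have bound_lim: "(\<lambda>t. C * q t) \<longlonglongrightarrow> 0"
    by (simp add: tendsto_mult_right_zero)
  have "E \<longlonglongrightarrow> 0"
    by (rule tendsto_sandwich[OF _ _ tendsto_const bound_lim]) (use E_nonneg E_le in auto)
  then have "(\<lambda>t. E 0 - E t) \<longlonglongrightarrow> E 0"
    by (auto intro!: tendsto_eq_intros)
  then show ?thesis
    unfolding sums_def partial .
qed

lemma tail_sum_formula:
  fixes q :: "nat \<Rightarrow> real"
  assumes dec: "decseq q" and q_sums: "q sums S"
  shows "(\<lambda>t. real (Suc t) * (q t - q (Suc t))) sums S"
proof -
  define f where "f t = real (Suc t) * (q t - q (Suc t))" for t
  have q_lim: "q \<longlonglongrightarrow> 0"
    using q_sums by (simp add: sums_iff summable_LIMSEQ_zero)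
  have q_nonneg: "0 \<le> q t" for t
    using decseq_ge[OF dec q_lim] by simp
  have f_nonneg: "0 \<le> f t" for t
    using dec by (simp add: f_def decseq_Suc_iff)
  have partial: "(\<Sum>t<T. f t) = (\<Sum>k<T. (q k - q T))" for T
    by (induction T) (simp_all add: f_def sum_subtractf algebra_simps)
  have partial_le: "(\<Sum>t<T. f t) \<le> S" for T
  proof -
    have "(\<Sum>k<T. (q k - q T)) \<le> (\<Sum>k<T. q k)"
      by (intro sum_mono) (simp add: q_nonneg)
    also have "\<dots> \<le> S"
      using q_sums q_nonneg by (auto simp: sums_iff intro: sum_le_suminf)
    finally show ?thesis
      by (simp add: partial)
  qed
  have f_summable: "summable f"
    by (rule summableI_nonneg_bounded) (use f_nonneg partial_le in auto)
  have "(\<Sum>k<K. q k) \<le> suminf f" for K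
  proof (rule LIMSEQ_le_const2)
    show "(\<lambda>T. \<Sum>k<K. (q k - q T)) \<longlonglongrightarrow> (\<Sum>k<K. q k)"
      using q_lim by (auto intro!: tendsto_eq_intros)
    show "\<exists>N. \<forall>T\<ge>N. (\<Sum>k<K. (q k - q T)) \<le> suminf f"
    proof (intro exI allI impI)
      fix T assume "K \<le> T"
      then have "(\<Sum>k<K. (q k - q T)) \<le> (\<Sum>k<T. (q k - q T))"
        using dec by (intro sum_mono2) (auto simp: decseq_def)
      also have "\<dots> \<le> suminf f"
        unfolding partial[symmetric] by (rule sum_le_suminf[OF f_summable]) (simp_all add: f_nonneg)
      finally show "(\<Sum>k<K. (q k - q T)) \<le> suminf f" .
    qed
  qed
  then have "S \<le> suminf f"
    using q_sums by (auto simp: sums_def intro: LIMSEQ_le_const2)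
  moreover have "suminf f \<le> S"
    by (rule suminf_le_const[OF f_summable partial_le])
  ultimately show ?thesis
    using f_summable by (simp add: f_def[abs_def] sums_iff)
qed

definition pending :: "nat \<Rightarrow> gstate \<Rightarrow> nat set" where
  "pending n s = {j. j < n \<and> fst (s j)}"

definition actions :: "nat \<Rightarrow> (nat \<Rightarrow> protocol) \<Rightarrow> gstate \<Rightarrow> (nat \<Rightarrow> nat) pmf" where
  "actions n P s = Pi_pmf (pending n s) 0 (\<lambda>j. P j (snd (s j)))"

definition resolve :: "nat \<Rightarrow> gstate \<Rightarrow> (nat \<Rightarrow> nat) \<Rightarrow> gstate" where
  "resolve n s a = (\<lambda>j. if j \<in> pending n s then (\<not> succeeds n s a j, snd (s j) @ [a j]) else s j)"

lemma finite_pending [simp]: "finite (pending n s)"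
  by (simp add: pending_def)

lemma pending_subset: "pending n s \<subseteq> {..<n}"
  by (auto simp: pending_def)

lemma step_eq_map_actions: "step n P s = map_pmf (resolve n s) (actions n P s)"
proof -
  have "Pi_pmf {..<n} 0 (\<lambda>j. if fst (s j) then P j (snd (s j)) else return_pmf 0) = actions n P s"
    unfolding actions_def
    by (subst Pi_pmf_subset'[of "{..<n}" "pending n s"]) (auto simp: pending_def intro!: Pi_pmf_cong)
  then show ?thesis
    by (simp add: step_def resolve_def[abs_def] pending_def)
qed

lemma succeeds_iff: "succeeds n s a j \<longleftrightarrow> a j \<noteq> 0 \<and> (\<forall>k \<in> pending n s - {j}. a k \<noteq> a j)"
  by (auto simp: succeeds_def pending_def)

lemma pending_resolve: "pending n (resolve n s a) = {j \<in> pending n s. \<not> succeeds n s a j}"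
  by (auto simp: pending_def resolve_def)

lemma fst_resolve:
  "fst (resolve n s a i) \<longleftrightarrow> i \<in> pending n s \<and> \<not> succeeds n s a i \<or> i \<notin> pending n s \<and> fst (s i)"
  by (simp add: resolve_def)

lemma pending_before_step:
  assumes "s' \<in> set_pmf (step n P s)" and "fst (s' j)"
  shows "fst (s j)"
  using assms by (auto simp: step_eq_map_actions resolve_def pending_def split: if_splits)

lemma latency_prob_0: "latency_prob n P i 0 = 0"
  by (simp add: latency_prob_def)

lemma latency_prob_nonneg: "0 \<le> latency_prob n P i t"
  by (simp add: latency_prob_def)

lemma latency_prob_Suc:
  "latency_prob n P i (Suc t) =
     measure_pmf.prob (state_dist n P t) {s. fst (s i)} -
     measure_pmf.prob (state_dist n P (Suc t)) {s. fst (s i)}"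
proof -
  define D where "D = state_dist n P t \<bind> (\<lambda>s. map_pmf (Pair s) (step n P s))"
  define before :: "(gstate \<times> gstate) set" where "before = {(s, s'). fst (s i)}"
  define after :: "(gstate \<times> gstate) set" where "after = {(s, s'). fst (s' i)}"
  have "latency_prob n P i (Suc t) = measure_pmf.prob D (before - before \<inter> after)"
    unfolding latency_prob_def D_def before_def after_def by (auto intro: arg_cong2[where f = measure])
  also have "\<dots> = measure_pmf.prob D before - measure_pmf.prob D (before \<inter> after)"
    by (rule measure_pmf.finite_measure_Diff) auto
  also have "measure_pmf.prob D (before \<inter> after) = measure_pmf.prob D after"
    by (rule measure_pmf_prob_cong_support)
       (auto simp: D_def before_def after_def dest: pending_before_step)
  finally have "latency_prob n P i (Suc t) = measure_pmf.prob D before - measure_pmf.prob D after" .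
  moreover have "measure_pmf.prob D before = measure_pmf.prob (map_pmf fst D) {s. fst (s i)}"
    "measure_pmf.prob D after = measure_pmf.prob (map_pmf snd D) {s. fst (s i)}"
    by (simp_all add: before_def after_def vimage_def case_prod_unfold)
  moreover have "map_pmf fst D = state_dist n P t" "map_pmf snd D = state_dist n P (Suc t)"
    by (simp_all add: D_def map_bind_pmf pmf.map_comp o_def map_pmf_const bind_return_pmf')
  ultimately show ?thesis
    by simp
qed

lemma latency_prob_sums:
  assumes "i < n" and pending_sums: "(\<lambda>t. measure_pmf.prob (state_dist n P t) {s. fst (s i)}) sums S"
  shows "latency_prob n P i sums 1" and "(\<lambda>t. real t * latency_prob n P i t) sums S"
proof -
  define q where "q t = measure_pmf.prob (state_dist n P t) {s. fst (s i)}" for t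
  have latency_Suc: "latency_prob n P i (Suc t) = q t - q (Suc t)" for t
    unfolding q_def by (rule latency_prob_Suc)
  have "decseq q"
  proof (rule decseq_SucI)
    show "q (Suc t) \<le> q t" for t
      using latency_Suc[of t] latency_prob_nonneg[of n P i "Suc t"] by linarith
  qed
  have q_sums: "q sums S"
    using pending_sums by (simp add: q_def[abs_def])
  then have "q \<longlonglongrightarrow> 0"
    by (simp add: sums_iff summable_LIMSEQ_zero)
  then have "(\<lambda>t. latency_prob n P i (Suc t)) sums (q 0 - 0)"
    unfolding latency_Suc by (rule telescope_sums')
  moreover have "q 0 = 1"
    using assms(1) by (simp add: q_def init_state_def)
  ultimately show "latency_prob n P i sums 1"
    by (simp add: sums_Suc_iff latency_prob_0)
  have "(\<lambda>t. real (Suc t) * latency_prob n P i (Suc t)) sums S"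
    unfolding latency_Suc by (rule tail_sum_formula[OF \<open>decseq q\<close> q_sums])
  then show "(\<lambda>t. real t * latency_prob n P i t) sums S"
    using sums_Suc_iff[of "\<lambda>t. real t * latency_prob n P i t"] by simp
qed

lemma expected_latency_eqI:
  assumes total: "latency_prob n P i sums 1"
    and mean: "(\<lambda>t. real t * latency_prob n P i t) sums L"
  shows "expected_latency n P i = ennreal L"
proof -
  have "(\<Sum>t. ennreal (latency_prob n P i t)) = 1"
    using total latency_prob_nonneg by (simp add: suminf_ennreal2 sums_iff)
  moreover have "(\<Sum>t. of_nat t * ennreal (latency_prob n P i t)) = ennreal L"
    using mean latency_prob_nonneg
    by (simp add: suminf_ennreal2 sums_iff ennreal_of_nat_eq_real_of_nat flip: ennreal_mult)
  ultimately show ?thesis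
    by (simp add: expected_latency_def)
qed

lemma succeeds_other_channel:
  assumes channels: "\<forall>l \<in> pending n s. a l \<in> {1, 2}"
    and j: "j \<in> pending n s" and k: "k \<in> pending n s" "k \<noteq> j"
    and succ_j: "succeeds n s a j"
  shows "a k = 3 - a j"
proof -
  have "a k \<noteq> a j"
    using succ_j k by (auto simp: succeeds_iff)
  moreover have "a k \<in> {1, 2}" "a j \<in> {1, 2}"
    using channels j k by auto
  ultimately show ?thesis
    by auto
qed

lemma succeeds_other_iff:
  assumes channels: "\<forall>l \<in> pending n s. a l \<in> {1, 2}"
    and j: "j \<in> pending n s" and k: "k \<in> pending n s" "k \<noteq> j"
    and succ_j: "succeeds n s a j"
  shows "succeeds n s a k \<longleftrightarrow> pending n s = {j, k}"
proof -
  have others: "a l = a k" if "l \<in> pending n s" "l \<noteq> j" for l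
    using succeeds_other_channel[OF channels j that succ_j] succeeds_other_channel[OF channels j k succ_j]
    by simp
  have "a k \<noteq> 0" "a j \<noteq> a k"
    using succeeds_other_channel[OF channels j k succ_j] channels j by auto
  then have "succeeds n s a k \<longleftrightarrow> (\<forall>l \<in> pending n s - {k}. l = j)"
    unfolding succeeds_iff using others by auto
  also have "\<dots> \<longleftrightarrow> pending n s = {j, k}"
    using j k by blast
  finally show ?thesis .
qed

lemma succeeds_unique:
  assumes channels: "\<forall>l \<in> pending n s. a l \<in> {1, 2}" and many: "3 \<le> card (pending n s)"
    and j: "j \<in> pending n s" and k: "k \<in> pending n s"
    and succ_j: "succeeds n s a j" and succ_k: "succeeds n s a k"
  shows "j = k"
proof (rule ccontr)
  assume "j \<noteq> k"
  then have "pending n s = {j, k}"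
    using succeeds_other_iff[OF channels j k _ succ_j] succ_k by simp
  then show False
    using many \<open>j \<noteq> k\<close> by simp
qed

lemma succeeds_iff_profile:
  assumes channels: "\<forall>l \<in> pending n s. a l \<in> {1, 2}" and j: "j \<in> pending n s"
  shows "succeeds n s a j \<longleftrightarrow>
    (\<exists>c \<in> {1, 2}. a \<in> Pi (pending n s) (\<lambda>k. {if k = j then c else 3 - c}))"
proof
  assume succ_j: "succeeds n s a j"
  have "a \<in> Pi (pending n s) (\<lambda>k. {if k = j then a j else 3 - a j})"
    using succeeds_other_channel[OF channels j _ _ succ_j] by auto
  then show "\<exists>c \<in> {1, 2}. a \<in> Pi (pending n s) (\<lambda>k. {if k = j then c else 3 - c})"
    using channels j by blast
next
  assume "\<exists>c \<in> {1, 2}. a \<in> Pi (pending n s) (\<lambda>k. {if k = j then c else 3 - c})"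
  then obtain c where "c \<in> {1, 2}" "a j = c" "\<forall>k \<in> pending n s - {j}. a k = 3 - c"
    using j by (auto simp: Pi_iff)
  then show "succeeds n s a j"
    by (auto simp: succeeds_iff)
qed

(* W(m) is the expected latency of one of m pending players who all use f^2: two pending players
   succeed together with probability 1/2, and for m >= 3 (when at most one player succeeds) W(m)
   solves W(m) = 1 + (1 - m / 2^(m-1)) W(m) + (m-1) / 2^(m-1) W(m-1). *)
definition remaining_latency :: "nat \<Rightarrow> real" where
  "remaining_latency m = (if m = 1 then 1 else 2 ^ m / real m)"

definition potential :: "nat \<Rightarrow> nat \<Rightarrow> gstate \<Rightarrow> real" where
  "potential n i s = (if fst (s i) then remaining_latency (card (pending n s)) else 0)"

lemma remaining_latency_nonneg: "0 \<le> remaining_latency m"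
  by (simp add: remaining_latency_def)

lemma remaining_latency_le: "remaining_latency m \<le> 2 ^ m"
  by (cases "m = 0") (auto simp: remaining_latency_def divide_le_eq)

lemma remaining_latency_increment:
  assumes "3 \<le> m"
  shows "real m * remaining_latency m - real (m - 1) * remaining_latency (m - 1) = 2 ^ (m - 1)"
proof -
  have "(2::real) ^ m = 2 * 2 ^ (m - 1)"
    using assms by (simp flip: power_Suc)
  moreover have "m \<noteq> 1" "m - 1 \<noteq> 1"
    using assms by auto
  ultimately show ?thesis
    using assms by (simp add: remaining_latency_def)
qed

lemma potential_nonneg: "0 \<le> potential n i s"
  by (simp add: potential_def remaining_latency_nonneg)

lemma potential_le: "potential n i s \<le> 2 ^ n * indicator {s. fst (s i)} s"
proof -
  have "card (pending n s) \<le> n"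
    using card_mono[OF _ pending_subset] by simp
  then have "(2::real) ^ card (pending n s) \<le> 2 ^ n"
    by (rule power_increasing) simp
  then have "remaining_latency (card (pending n s)) \<le> 2 ^ n"
    by (rule order_trans[OF remaining_latency_le])
  then show ?thesis
    by (simp add: potential_def)
qed

lemma potential_abs_le: "\<bar>potential n i s\<bar> \<le> 2 ^ n"
  using potential_nonneg[of n i s] potential_le[of n i s] by (cases "fst (s i)") simp_all

lemma integrable_potential: "integrable (measure_pmf p) (potential n i)"
  by (rule measure_pmf.integrable_const_bound[where B = "2 ^ n"]) (simp_all add: potential_abs_le)

lemma expectation_potential_le:
  "measure_pmf.expectation p (potential n i) \<le> 2 ^ n * measure_pmf.prob p {s. fst (s i)}"
proof -
  have "measure_pmf.expectation p (potential n i) \<le>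
        measure_pmf.expectation p (\<lambda>s. 2 ^ n * indicator {s. fst (s i)} s)"
    by (intro Bochner_Integration.integral_mono integrable_potential
          measure_pmf.integrable_const_bound[where B = "2 ^ n"])
       (simp_all add: potential_le)
  then show ?thesis
    by simp
qed

lemma potential_resolve:
  assumes "i \<in> pending n s"
  shows "potential n i (resolve n s a) =
    (if succeeds n s a i then 0 else remaining_latency (card {j \<in> pending n s. \<not> succeeds n s a j}))"
  using assms by (simp add: potential_def pending_resolve fst_resolve)

locale two_channel_profile =
  fixes n i :: nat and P :: "nat \<Rightarrow> protocol"
  assumes player_i: "i < n"
    and never_idle: "set_pmf (P j h) \<subseteq> {1, 2}"
    and others_uniform: "j \<noteq> i \<Longrightarrow> P j h = pmf_of_set {1, 2}"
begin

lemma actions_channels: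
  assumes "a \<in> set_pmf (actions n P s)" and "j \<in> pending n s"
  shows "a j \<in> {1, 2}"
  using assms never_idle by (auto simp: actions_def set_Pi_pmf PiE_dflt_def)

lemma finite_set_pmf_actions: "finite (set_pmf (actions n P s))"
  unfolding actions_def set_Pi_pmf[OF finite_pending]
  by (rule finite_PiE_dflt) (auto intro: finite_subset[OF never_idle])

lemma prob_actions_profile:
  assumes i: "i \<in> pending n s" and channels: "\<forall>k \<in> pending n s. b k \<in> {1, 2}"
  shows "measure_pmf.prob (actions n P s) (Pi (pending n s) (\<lambda>k. {b k})) =
         pmf (P i (snd (s i))) (b i) / 2 ^ (card (pending n s) - 1)"
proof -
  have "measure_pmf.prob (actions n P s) (Pi (pending n s) (\<lambda>k. {b k})) =
        (\<Prod>k \<in> pending n s. pmf (P k (snd (s k))) (b k))"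
    by (simp add: actions_def measure_Pi_pmf_Pi measure_pmf_single)
  also have "\<dots> = pmf (P i (snd (s i))) (b i) * (\<Prod>k \<in> pending n s - {i}. pmf (P k (snd (s k))) (b k))"
    by (rule prod.remove[OF finite_pending i])
  also have "(\<Prod>k \<in> pending n s - {i}. pmf (P k (snd (s k))) (b k)) = (\<Prod>k \<in> pending n s - {i}. 1 / 2)"
    using channels by (intro prod.cong) (auto simp: others_uniform)
  finally show ?thesis
    using i by (simp add: card_Diff_singleton power_one_over)
qed

lemma prob_succeeds:
  assumes i: "i \<in> pending n s" and j: "j \<in> pending n s"
  shows "measure_pmf.prob (actions n P s) {a. succeeds n s a j} = 1 / 2 ^ (card (pending n s) - 1)"
proof -
  define profile :: "nat \<Rightarrow> nat \<Rightarrow> nat" where "profile c k = (if k = j then c else 3 - c)" for c k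
  define E where "E c = Pi (pending n s) (\<lambda>k. {profile c k})" for c
  have "measure_pmf.prob (actions n P s) {a. succeeds n s a j} =
        measure_pmf.prob (actions n P s) (E 1 \<union> E 2)"
  proof (rule measure_pmf_prob_cong_support)
    fix a assume "a \<in> set_pmf (actions n P s)"
    then have "\<forall>k \<in> pending n s. a k \<in> {1, 2}"
      using actions_channels by blast
    then have "succeeds n s a j \<longleftrightarrow> (\<exists>c \<in> {1, 2}. a \<in> E c)"
      unfolding E_def profile_def by (rule succeeds_iff_profile[OF _ j])
    then show "a \<in> {a. succeeds n s a j} \<longleftrightarrow> a \<in> E 1 \<union> E 2"
      by auto
  qed
  also have "\<dots> = measure_pmf.prob (actions n P s) (E 1) + measure_pmf.prob (actions n P s) (E 2)"
  proof (rule measure_pmf.finite_measure_Union)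
    show "E 1 \<inter> E 2 = {}"
    proof (rule equals0I)
      fix a assume "a \<in> E 1 \<inter> E 2"
      then have "a j \<in> {profile 1 j}" "a j \<in> {profile 2 j}"
        unfolding E_def using Pi_mem[OF _ j] by blast+
      then show False
        by (simp add: profile_def)
    qed
  qed simp_all
  also have "\<dots> = (pmf (P i (snd (s i))) (profile 1 i) + pmf (P i (snd (s i))) (profile 2 i))
                    / 2 ^ (card (pending n s) - 1)"
    using i by (simp add: E_def prob_actions_profile profile_def add_divide_distrib)
  \<comment> \<open>the two profiles put player i on different channels\<close>
  also have "pmf (P i (snd (s i))) (profile 1 i) + pmf (P i (snd (s i))) (profile 2 i) = 1"
    using sum_pmf_eq_1[of "{1, 2}" "P i (snd (s i))"] never_idle
    by (cases "i = j") (simp_all add: profile_def)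
  finally show ?thesis .
qed

lemma potential_resolve_few:
  assumes a: "a \<in> set_pmf (actions n P s)" and i: "i \<in> pending n s" and few: "card (pending n s) \<le> 2"
  shows "potential n i (resolve n s a) =
    remaining_latency (card (pending n s)) * (1 - indicator {a. succeeds n s a i} a)"
proof (cases "succeeds n s a i")
  case False
  have "\<not> succeeds n s a j" if j: "j \<in> pending n s" for j
  proof
    assume succ_j: "succeeds n s a j"
    with False have "j \<noteq> i" by auto
    have "{j, i} = pending n s"
      using j i few by (intro card_seteq) (auto simp: \<open>j \<noteq> i\<close>)
    then show False
      using succeeds_other_iff[OF _ j i \<open>j \<noteq> i\<close>[symmetric] succ_j] False actions_channels[OF a]
      by auto
  qed
  then have "{j \<in> pending n s. \<not> succeeds n s a j} = pending n s"
    by blast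
  then show ?thesis
    using i False by (simp add: potential_resolve)
qed (use i in \<open>simp add: potential_resolve\<close>)

lemma potential_resolve_many:
  assumes a: "a \<in> set_pmf (actions n P s)" and i: "i \<in> pending n s" and many: "3 \<le> card (pending n s)"
  defines "m \<equiv> card (pending n s)"
  shows "potential n i (resolve n s a) =
    remaining_latency m * (1 - indicator {a. succeeds n s a i} a)
    - (remaining_latency m - remaining_latency (m - 1)) *
      (\<Sum>j \<in> pending n s - {i}. indicator {a. succeeds n s a j} a)"
proof -
  define S where "S = {j \<in> pending n s. succeeds n s a j}"
  have channels: "\<forall>l \<in> pending n s. a l \<in> {1, 2}"
    using actions_channels[OF a] by blast
  have unique: "j = k" if "j \<in> S" "k \<in> S" for j k
    using succeeds_unique[OF channels many] that by (simp add: S_def)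
  moreover have "finite S"
    by (simp add: S_def)
  ultimately have "card S \<le> Suc 0"
    using card_le_Suc0_iff_eq by blast
  then have card_S: "card S = 0 \<or> card S = 1"
    by linarith
  show ?thesis
  proof (cases "succeeds n s a i")
    case True
    then have "S = {i}"
      using i unique by (auto simp: S_def)
    then have "(pending n s - {i}) \<inter> {j. succeeds n s a j} = {}"
      by (auto simp: S_def)
    then show ?thesis
      using i True by (simp add: potential_resolve indicator_def)
  next
    case False
    have "{j \<in> pending n s. \<not> succeeds n s a j} = pending n s - S"
      by (auto simp: S_def)
    then have "card {j \<in> pending n s. \<not> succeeds n s a j} = m - card S"
      unfolding m_def by (simp add: card_Diff_subset \<open>finite S\<close> S_def)
    moreover have "(pending n s - {i}) \<inter> {j. succeeds n s a j} = S"
      using False by (auto simp: S_def)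
    ultimately show ?thesis
      using i False card_S by (auto simp: potential_resolve indicator_def)
  qed
qed

lemma integrable_actions: "integrable (measure_pmf (actions n P s)) (f :: _ \<Rightarrow> real)"
  by (rule integrable_measure_pmf_finite[OF finite_set_pmf_actions])

lemma expectation_potential_resolve:
  assumes i: "i \<in> pending n s"
  defines "m \<equiv> card (pending n s)"
  shows "measure_pmf.expectation (actions n P s) (\<lambda>a. potential n i (resolve n s a)) =
         remaining_latency m - 1"
proof -
  define succ_ind :: "nat \<Rightarrow> (nat \<Rightarrow> nat) \<Rightarrow> real"
    where "succ_ind j a = indicator {a. succeeds n s a j} a" for j a
  have m_pos: "1 \<le> m"
    using i by (auto simp: m_def Suc_le_eq card_gt_0_iff)
  have expectation_succ_ind: "measure_pmf.expectation (actions n P s) (succ_ind j) = 1 / 2 ^ (m - 1)"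
    if "j \<in> pending n s" for j
    using prob_succeeds[OF i that] by (simp add: succ_ind_def[abs_def] m_def)
  show ?thesis
  proof (cases "m \<le> 2")
    case True
    then have "measure_pmf.expectation (actions n P s) (\<lambda>a. potential n i (resolve n s a)) =
        measure_pmf.expectation (actions n P s) (\<lambda>a. remaining_latency m * (1 - succ_ind i a))"
      using i by (intro expectation_cong_support) (simp add: potential_resolve_few m_def succ_ind_def)
    also have "\<dots> = remaining_latency m * (1 - 1 / 2 ^ (m - 1))"
      using i expectation_succ_ind by (simp add: integrable_actions)
    also have "\<dots> = remaining_latency m - 1"
      using m_pos True by (auto simp: remaining_latency_def le_Suc_eq numeral_2_eq_2)
    finally show ?thesis .
  next
    case False
    then have "measure_pmf.expectation (actions n P s) (\<lambda>a. potential n i (resolve n s a)) =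
        measure_pmf.expectation (actions n P s) (\<lambda>a. remaining_latency m * (1 - succ_ind i a)
          - (remaining_latency m - remaining_latency (m - 1)) * (\<Sum>j \<in> pending n s - {i}. succ_ind j a))"
      using i by (intro expectation_cong_support) (simp add: potential_resolve_many m_def succ_ind_def)
    also have "\<dots> = remaining_latency m * (1 - 1 / 2 ^ (m - 1))
          - (remaining_latency m - remaining_latency (m - 1)) * (real (m - 1) / 2 ^ (m - 1))"
      using i expectation_succ_ind by (simp add: integrable_actions m_def card_Diff_singleton)
    also have "\<dots> = remaining_latency m
          - (real m * remaining_latency m - real (m - 1) * remaining_latency (m - 1)) / 2 ^ (m - 1)"
      using m_pos by (simp add: field_simps of_nat_diff)
    also have "\<dots> = remaining_latency m - 1"
      using False remaining_latency_increment[of m] by (simp add: of_nat_diff)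
    finally show ?thesis .
  qed
qed

lemma expectation_potential_step:
  "measure_pmf.expectation (step n P s) (potential n i) = potential n i s - indicator {s. fst (s i)} s"
proof (cases "i \<in> pending n s")
  case True
  then have "measure_pmf.expectation (step n P s) (potential n i) = remaining_latency (card (pending n s)) - 1"
    using expectation_potential_resolve[OF True] by (simp add: step_eq_map_actions)
  then show ?thesis
    using True by (simp add: potential_def pending_def)
next
  case False
  then have "\<not> fst (s i)"
    using player_i by (simp add: pending_def)
  then show ?thesis
    using False by (simp add: step_eq_map_actions potential_def fst_resolve)
qed

lemma expectation_potential_Suc:
  "measure_pmf.expectation (state_dist n P (Suc t)) (potential n i) =
   measure_pmf.expectation (state_dist n P t) (potential n i) -
   measure_pmf.prob (state_dist n P t) {s. fst (s i)}"
proof -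
  have integrable_indicator: "integrable (measure_pmf (state_dist n P t)) (indicator {s. fst (s i)} :: _ \<Rightarrow> real)"
    by (rule measure_pmf.integrable_const_bound[where B = 1]) simp_all
  have "measure_pmf.expectation (state_dist n P (Suc t)) (potential n i) =
        measure_pmf.expectation (state_dist n P t)
          (\<lambda>s. potential n i s - indicator {s. fst (s i)} s)"
    by (simp add: expectation_bind_pmf_bounded[OF potential_abs_le] expectation_potential_step)
  also have "\<dots> = measure_pmf.expectation (state_dist n P t) (potential n i) -
                   measure_pmf.prob (state_dist n P t) {s. fst (s i)}"
    using integrable_potential integrable_indicator by (simp add: Bochner_Integration.integral_diff)
  finally show ?thesis .
qed

lemma pending_prob_sums:
  assumes "2 \<le> n"
  shows "(\<lambda>t. measure_pmf.prob (state_dist n P t) {s. fst (s i)}) sums (2 ^ n / n)"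
proof -
  define q where "q t = measure_pmf.prob (state_dist n P t) {s. fst (s i)}" for t
  define E where "E t = measure_pmf.expectation (state_dist n P t) (potential n i)" for t
  have "q sums E 0"
  proof (rule sums_potential_drop[where C = "2 ^ n"])
    show "E (Suc t) = E t - q t" for t
      unfolding E_def q_def by (rule expectation_potential_Suc)
  qed (simp_all add: E_def q_def expectation_potential_le potential_nonneg)
  moreover have "pending n (init_state n) = {..<n}"
    by (auto simp: pending_def init_state_def)
  then have "E 0 = 2 ^ n / n"
    using player_i assms by (simp add: E_def potential_def remaining_latency_def init_state_def)
  ultimately show ?thesis
    by (simp add: q_def[abs_def])
qed

end

theorem lemma4:
  fixes n i :: nat and g :: protocol
  assumes "n \<ge> 2" and "i < n" and "g \<in> G_f2"
  shows "expected_latency n (\<lambda>j. if j = i then g else f2) i = ennreal (2 ^ n / real n)"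
proof -
  obtain hs where g: "g = g_of hs" and hs: "set hs \<subseteq> {1, 2}"
    using assms(3) by (auto simp: G_f2_def)
  interpret two_channel_profile n i "\<lambda>j. if j = i then g else f2"
  proof
    show "set_pmf ((if j = i then g else f2) h) \<subseteq> {1, 2}" for j h
    proof (cases "j = i \<and> length h < length hs")
      case True
      then have "hs ! length h \<in> {1, 2}"
        using hs nth_mem by blast
      with True show ?thesis
        by (simp add: g g_of_def)
    qed (auto simp: g g_of_def f2_def)
  qed (simp_all add: assms(2) f2_def)
  show ?thesis
    using latency_prob_sums[OF assms(2) pending_prob_sums[OF assms(1)]] by (rule expected_latency_eqI)
qed

end
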